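(* Let $X\in\mathbb{R}^{n\times p}$ have rows $X_1^\top,\dots,X_n^\top$, let $R>0$, $I=[-R,R]$, and let $\beta\in\mathbb{R}^p$ satisfy $X_i^\top\beta\in I$ for all $i$. Let $\xi_1,\dots,\xi_n,\epsilon_1,\dots,\epsilon_n$ be independent random variables with mean $0$, where $\xi_1,\dots,\xi_n$ are identically distributed and $|\xi_i|<r$ for some $r>0$. Let $R_0>R+r$ and let $f$ be a function that is continuous on $\Delta_0=\{z\in\mathbb{C}:|z|\le R_0\}$, analytic in its interior, and real-valued on $[-R_0,R_0]$. Let $\Delta=\{z\in\mathbb{C}:|z|<R_0-r\}$, $g(z)=\mathrm{E}[f(z+\xi_1)]$ for $z\in\Delta$, and $\delta_i=f(X_i^\top\beta+\xi_i)-g(X_i^\top\beta)+\epsilon_i$, $\delta=(\delta_1,\dots,\delta_n)^\top$, $\epsilon=(\epsilon_1,\dots,\epsilon_n)^\top$. Then: (1) $g$ is analytic on $\Delta$ and $\mathsf{d}(g,I)\ge\mathsf{d}(f,[-R_0,R_0])$. (2) If there are $\sigma>0$ and $c_\epsilon>0$ such that $\Pr\{|a^\top\epsilon|>t\|a\|_2\}\le c_\epsilon e^{-t^2/(2\sigma^2)}$ for all $t\ge0$ and $a\in\mathbb{R}^n$, then there are $\sigma'>0$ and $c'_\epsilon>0$ such that $\Pr\{|a^\top\delta|>t\|a\|_2\}\le c'_\epsilon e^{-t^2/(2\sigma'^2)}$ for all $t\ge0$ and $a\in\mathbb{R}^n$. Moreover, if the $\epsilon_i$ are bounded, then there is $\sigma'>0$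 such that this holds with $c'_\epsilon=2$.
   Context: For a real-valued function $h$ defined on an interval $J\subset\mathbb{R}$, $\mathsf{d}(h,J)=\inf\{|h(x)-h(y)|/|x-y|: x,y\in J,\ x\neq y\}$. *)

theory Defs
  imports "HOL-Probability.Probability"
begin

definition dcoef :: "(real \<Rightarrow> real) \<Rightarrow> real set \<Rightarrow> real" where
  "dcoef h J = Inf {\<bar>h x - h y\<bar> / \<bar>x - y\<bar> | x y. x \<in> J \<and> y \<in> J \<and> x \<noteq> y}"

end

theory Submission
  imports Defs "HOL-Complex_Analysis.Complex_Analysis"
begin

text \<open>
  The function \<open>g(z) = E f(z + \<xi>)\<close> is holomorphic by differentiation under the integral sign:
  near a point \<open>z\<^sub>0\<close> the difference quotients of \<open>f(\<cdot> + \<xi>)\<close> are bounded by a Lipschitz constant of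
  \<open>f\<close> on a closed disc inside its domain, so dominated convergence applies. For the modulus
  \<open>d\<close>, fix \<open>x \<noteq> y\<close> in \<open>[-R, R]\<close>: the function \<open>\<psi>(s) = f(x + s) - f(y + s)\<close> satisfies
  \<open>|\<psi>(s)| \<ge> d(f)|x - y|\<close> on \<open>[-r, r]\<close>, so for \<open>d(f) > 0\<close> it has constant sign there and
  \<open>|g(x) - g(y)| = |E \<psi>(\<xi>)| \<ge> d(f)|x - y|\<close>.

  The noise decomposes as \<open>\<delta>\<^sub>i = \<Phi>\<^sub>i(\<xi>\<^sub>i) + \<epsilon>\<^sub>i\<close> with \<open>\<Phi>\<^sub>i(s) = f(x\<^sub>i + s) - g(x\<^sub>i)\<close> bounded,
  and centred because the \<open>\<xi>\<^sub>i\<close> are identically distributed. Hoeffding's inequality makes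
  \<open>a\<^sup>T\<Phi>(\<xi>)\<close> sub-Gaussian, and a union bound at level \<open>t/2\<close> adds its tail to that of \<open>a\<^sup>T\<epsilon>\<close>.
  If \<open>\<epsilon>\<close> is bounded, Hoeffding's inequality applies to \<open>\<delta>\<close> directly and gives the constant 2.
\<close>

section \<open>Differentiation under the integral sign\<close>

lemma borel_measurable_continuous_on_comp:
  fixes f :: "'b::topological_space \<Rightarrow> 'c::topological_space"
  assumes "continuous_on S f" and "X \<in> borel_measurable M" and "\<And>\<omega>. \<omega> \<in> space M \<Longrightarrow> X \<omega> \<in> S"
  shows "(\<lambda>\<omega>. f (X \<omega>)) \<in> borel_measurable M"
proof -
  have "X \<in> measurable M (restrict_space borel S)"
    using assms(2,3) by (intro measurable_restrict_space2) auto
  from measurable_compose[OF this borel_measurable_continuous_on_restrict[OF assms(1)]]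
  show ?thesis .
qed

lemma integrable_continuous_on_comp:
  fixes f :: "'b::topological_space \<Rightarrow> 'c::{banach, second_countable_topology}"
  assumes "finite_measure M" and "continuous_on S f" and "compact S"
    and "X \<in> borel_measurable M" and "\<And>\<omega>. \<omega> \<in> space M \<Longrightarrow> X \<omega> \<in> S"
  shows "integrable M (\<lambda>\<omega>. f (X \<omega>))"
proof -
  obtain B where B: "\<And>x. x \<in> S \<Longrightarrow> norm (f x) \<le> B"
    using compact_imp_bounded[OF compact_continuous_image[OF assms(2,3)]]
    by (meson bounded_iff imageI)
  show ?thesis
    using assms(5) by (intro finite_measure.integrable_const_bound[OF assms(1), where B=B]
        AE_I2 B borel_measurable_continuous_on_comp[OF assms(2,4)]) auto
qed

lemma integral_dominated_convergence_at:
  fixes s :: "'c::first_countable_topology \<Rightarrow> 'a \<Rightarrow> 'b::{banach, second_countable_topology}"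
  assumes "f \<in> borel_measurable M" and "integrable M w"
    and meas: "\<forall>\<^sub>F z in at z0. s z \<in> borel_measurable M"
    and lim: "AE \<omega> in M. ((\<lambda>z. s z \<omega>) \<longlongrightarrow> f \<omega>) (at z0)"
    and bound: "\<forall>\<^sub>F z in at z0. AE \<omega> in M. norm (s z \<omega>) \<le> w \<omega>"
  shows "((\<lambda>z. integral\<^sup>L M (s z)) \<longlongrightarrow> integral\<^sup>L M f) (at z0)"
  unfolding tendsto_at_iff_sequentially
proof (intro allI impI)
  fix X assume "\<forall>i. X i \<in> UNIV - {z0}" and "X \<longlonglongrightarrow> z0"
  then have X: "filterlim X (at z0) sequentially"
    by (simp add: filterlim_at)
  obtain N where N: "\<And>i. N \<le> i \<Longrightarrow> s (X i) \<in> borel_measurable M \<and> (AE \<omega> in M. norm (s (X i) \<omega>) \<le> w \<omega>)"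
    using filterlim_iff[THEN iffD1, OF X, rule_format, OF eventually_conj[OF meas bound]]
    by (auto simp: eventually_sequentially)
  show "((\<lambda>z. integral\<^sup>L M (s z)) \<circ> X) \<longlonglongrightarrow> integral\<^sup>L M f"
    unfolding comp_def
  proof (rule LIMSEQ_offset[where k=N], rule integral_dominated_convergence[where w=w])
    show "AE \<omega> in M. (\<lambda>i. s (X (i + N)) \<omega>) \<longlonglongrightarrow> f \<omega>"
      using lim by eventually_elim (rule LIMSEQ_ignore_initial_segment[OF filterlim_compose[OF _ X]])
    show "s (X (i + N)) \<in> borel_measurable M" for i
      using N[of "i + N"] by simp
    show "AE \<omega> in M. norm (s (X (i + N)) \<omega>) \<le> w \<omega>" for i
      using N[of "i + N"] by simp
  qed fact+
qed

lemma has_field_derivative_integral: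
  fixes h :: "'b::{real_normed_field, banach, second_countable_topology} \<Rightarrow> 'a \<Rightarrow> 'b"
  assumes integrable: "\<forall>\<^sub>F z in nhds z0. integrable M (h z)"
    and "h' \<in> borel_measurable M" and "integrable M w"
    and deriv: "\<And>\<omega>. \<omega> \<in> space M \<Longrightarrow> ((\<lambda>z. h z \<omega>) has_field_derivative h' \<omega>) (at z0)"
    and lipschitz: "\<forall>\<^sub>F z in at z0. \<forall>\<omega>\<in>space M. norm (h z \<omega> - h z0 \<omega>) \<le> w \<omega> * norm (z - z0)"
  shows "((\<lambda>z. integral\<^sup>L M (h z)) has_field_derivative integral\<^sup>L M h') (at z0)"
proof -
  let ?q = "\<lambda>z \<omega>. (h z \<omega> - h z0 \<omega>) / (z - z0)"
  have int_at: "\<forall>\<^sub>F z in at z0. integrable M (h z)"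
    using integrable unfolding eventually_at_filter by eventually_elim simp
  have int0: "integrable M (h z0)"
    using integrable by (rule eventually_nhds_x_imp_x)
  have "((\<lambda>z. integral\<^sup>L M (?q z)) \<longlongrightarrow> integral\<^sup>L M h') (at z0)"
  proof (rule integral_dominated_convergence_at[where w=w])
    show "\<forall>\<^sub>F z in at z0. ?q z \<in> borel_measurable M"
      using int_at by eventually_elim (use int0 in auto)
    show "AE \<omega> in M. ((\<lambda>z. ?q z \<omega>) \<longlongrightarrow> h' \<omega>) (at z0)"
      using deriv by (intro AE_I2) (simp add: has_field_derivative_iff)
    have "\<forall>\<^sub>F z in at z0. z \<noteq> z0"
      by (simp add: eventually_at_filter)
    with lipschitz show "\<forall>\<^sub>F z in at z0. AE \<omega> in M. norm (?q z \<omega>) \<le> w \<omega>"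
      by eventually_elim (auto intro!: AE_I2 simp: norm_divide divide_le_eq)
  qed (use assms in auto)
  moreover have "\<forall>\<^sub>F z in at z0. integral\<^sup>L M (?q z) = (integral\<^sup>L M (h z) - integral\<^sup>L M (h z0)) / (z - z0)"
    using int_at by eventually_elim (use int0 in simp)
  ultimately show ?thesis
    unfolding has_field_derivative_iff by (rule Lim_transform_eventually)
qed

lemma holomorphic_lipschitz_on_cball:
  fixes f :: "complex \<Rightarrow> complex"
  assumes "f holomorphic_on S" and "open S" and "cball c \<rho> \<subseteq> S"
  obtains K where "\<And>a b. a \<in> cball c \<rho> \<Longrightarrow> b \<in> cball c \<rho> \<Longrightarrow> norm (f a - f b) \<le> K * norm (a - b)"
proof -
  have "deriv f holomorphic_on S"
    using assms(1,2) by (rule holomorphic_deriv)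
  then have "compact (deriv f ` cball c \<rho>)"
    using assms(3) by (intro compact_continuous_image holomorphic_on_imp_continuous_on) (auto elim: holomorphic_on_subset)
  then obtain K where K: "\<And>w. w \<in> cball c \<rho> \<Longrightarrow> norm (deriv f w) \<le> K"
    by (meson compact_imp_bounded bounded_iff imageI)
  have "(f has_field_derivative deriv f w) (at w within cball c \<rho>)" if "w \<in> cball c \<rho>" for w
    using assms that by (meson holomorphic_derivI has_field_derivative_at_within subsetD)
  with K show ?thesis
    by (intro that field_differentiable_bound[where f'="deriv f", OF convex_cball]) auto
qed

lemma shift_mem_cball:
  fixes z :: complex
  assumes "norm z + r \<le> \<rho>" and "\<bar>x\<bar> \<le> r"
  shows "z + complex_of_real x \<in> cball 0 \<rho>"
  using norm_triangle_ineq[of z "complex_of_real x"] assms by auto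

lemma continuous_on_Re_of_real:
  fixes f :: "complex \<Rightarrow> complex"
  assumes "continuous_on (cball 0 R) f"
  shows "continuous_on {-R..R} (\<lambda>s. Re (f (of_real s)))"
  by (intro continuous_intros continuous_on_compose2[OF assms]) (auto simp: abs_le_iff)

lemma Re_integral_shift:
  fixes f :: "complex \<Rightarrow> complex" and \<xi> :: "'a \<Rightarrow> real"
  assumes M: "finite_measure M" and \<xi>: "\<xi> \<in> borel_measurable M"
    and \<xi>_bdd: "\<And>\<omega>. \<omega> \<in> space M \<Longrightarrow> \<bar>\<xi> \<omega>\<bar> \<le> r"
    and f_cont: "continuous_on (cball 0 R0) f" and "\<bar>x\<bar> + r \<le> R0"
  shows "Re (integral\<^sup>L M (\<lambda>\<omega>. f (of_real x + of_real (\<xi> \<omega>))))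
    = integral\<^sup>L M (\<lambda>\<omega>. Re (f (of_real (x + \<xi> \<omega>))))"
proof -
  have "(of_real x + of_real (\<xi> \<omega>) :: complex) \<in> cball 0 R0" if "\<omega> \<in> space M" for \<omega>
    using \<xi>_bdd[OF that] \<open>\<bar>x\<bar> + r \<le> R0\<close> by (intro shift_mem_cball) auto
  moreover have "(\<lambda>\<omega>. of_real x + of_real (\<xi> \<omega>) :: complex) \<in> borel_measurable M"
    using \<xi> by measurable
  ultimately have "integrable M (\<lambda>\<omega>. f (of_real x + of_real (\<xi> \<omega>)))"
    by (intro integrable_continuous_on_comp[OF M f_cont compact_cball])
  then show ?thesis
    by simp
qed

lemma has_field_derivative_integral_shift:
  fixes f :: "complex \<Rightarrow> complex" and \<xi> :: "'a \<Rightarrow> real"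
  assumes M: "finite_measure M" and \<xi>: "\<xi> \<in> borel_measurable M"
    and \<xi>_bdd: "\<And>\<omega>. \<omega> \<in> space M \<Longrightarrow> \<bar>\<xi> \<omega>\<bar> \<le> r"
    and f_cont: "continuous_on (cball 0 R0) f" and f_holo: "f holomorphic_on ball 0 R0"
    and z0: "norm z0 + r < R0"
  shows "((\<lambda>z. integral\<^sup>L M (\<lambda>\<omega>. f (z + of_real (\<xi> \<omega>)))) has_field_derivative
      integral\<^sup>L M (\<lambda>\<omega>. deriv f (z0 + of_real (\<xi> \<omega>)))) (at z0)"
proof -
  define d where "d = (R0 - r - norm z0) / 2"
  define \<rho> where "\<rho> = norm z0 + d + r"
  have "0 < d" "\<rho> < R0"
    using z0 by (simp_all add: d_def \<rho>_def field_simps)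
  have near: "z + of_real (\<xi> \<omega>) \<in> cball 0 \<rho>" if "z \<in> ball z0 d" "\<omega> \<in> space M" for z \<omega>
    using that norm_triangle_ineq2[of z z0] \<xi>_bdd[OF that(2)]
    by (intro shift_mem_cball) (auto simp: \<rho>_def dist_norm norm_minus_commute)
  have shift_meas: "(\<lambda>\<omega>. z + of_real (\<xi> \<omega>)) \<in> borel_measurable M" for z :: complex
    using \<xi> by measurable
  have in_ball: "\<forall>\<^sub>F z in nhds z0. z \<in> ball z0 d"
    using \<open>0 < d\<close> by (intro eventually_nhds_in_open) auto
  have cball_sub: "cball 0 \<rho> \<subseteq> ball 0 R0"
    using \<open>\<rho> < R0\<close> by auto
  obtain K where K: "\<And>a b. a \<in> cball 0 \<rho> \<Longrightarrow> b \<in> cball 0 \<rho> \<Longrightarrow> norm (f a - f b) \<le> K * norm (a - b)"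
    using holomorphic_lipschitz_on_cball[OF f_holo open_ball cball_sub] by blast
  show ?thesis
  proof (rule has_field_derivative_integral[where w="\<lambda>_. K"])
    show "\<forall>\<^sub>F z in nhds z0. integrable M (\<lambda>\<omega>. f (z + of_real (\<xi> \<omega>)))"
      using in_ball
    proof eventually_elim
      case (elim z)
      then show ?case
        using near[OF elim] \<open>\<rho> < R0\<close>
        by (intro integrable_continuous_on_comp[OF M f_cont compact_cball shift_meas]) fastforce
    qed
    have "deriv f holomorphic_on cball 0 \<rho>"
      using cball_sub by (intro holomorphic_deriv[OF f_holo open_ball, THEN holomorphic_on_subset])
    then show "(\<lambda>\<omega>. deriv f (z0 + of_real (\<xi> \<omega>))) \<in> borel_measurable M"
      using near \<open>0 < d\<close>
      by (intro borel_measurable_continuous_on_comp[OF holomorphic_on_imp_continuous_on shift_meas]) auto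
    show "((\<lambda>z. f (z + of_real (\<xi> \<omega>))) has_field_derivative deriv f (z0 + of_real (\<xi> \<omega>))) (at z0)"
      if "\<omega> \<in> space M" for \<omega>
      using near[OF _ that, of z0] \<open>0 < d\<close> \<open>\<rho> < R0\<close> f_holo
      by (subst DERIV_shift[symmetric]) (auto intro!: holomorphic_derivI)
    show "\<forall>\<^sub>F z in at z0. \<forall>\<omega>\<in>space M. norm (f (z + of_real (\<xi> \<omega>)) - f (z0 + of_real (\<xi> \<omega>)))
        \<le> K * norm (z - z0)"
      unfolding eventually_at_filter
    proof (rule eventually_mono[OF in_ball], intro impI ballI)
      fix z \<omega> assume z: "z \<in> ball z0 d" and \<omega>: "\<omega> \<in> space M"
      have "z0 \<in> ball z0 d"
        using \<open>0 < d\<close> by simp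
      from K[OF near[OF z \<omega>] near[OF this \<omega>]]
      show "norm (f (z + of_real (\<xi> \<omega>)) - f (z0 + of_real (\<xi> \<omega>))) \<le> K * norm (z - z0)"
        by simp
    qed
  qed (rule finite_measure.integrable_const[OF M])
qed

lemma holomorphic_on_integral_shift:
  fixes f :: "complex \<Rightarrow> complex" and \<xi> :: "'a \<Rightarrow> real"
  assumes "finite_measure M" and "\<xi> \<in> borel_measurable M"
    and "\<And>\<omega>. \<omega> \<in> space M \<Longrightarrow> \<bar>\<xi> \<omega>\<bar> \<le> r"
    and "continuous_on (cball 0 R0) f" and "f holomorphic_on ball 0 R0"
  shows "(\<lambda>z. integral\<^sup>L M (\<lambda>\<omega>. f (z + of_real (\<xi> \<omega>)))) holomorphic_on ball 0 (R0 - r)"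
  unfolding holomorphic_on_open[OF open_ball]
proof
  fix z0 :: complex assume "z0 \<in> ball 0 (R0 - r)"
  then have "norm z0 + r < R0"
    by simp
  from has_field_derivative_integral_shift[OF assms this]
  show "\<exists>f'. ((\<lambda>z. integral\<^sup>L M (\<lambda>\<omega>. f (z + of_real (\<xi> \<omega>)))) has_field_derivative f') (at z0)" ..
qed

section \<open>The modulus \<open>dcoef\<close> of a shifted expectation\<close>

lemma dcoef_cong:
  assumes "\<And>x. x \<in> J \<Longrightarrow> h x = h' x"
  shows "dcoef h J = dcoef h' J"
proof -
  have "(\<exists>x y. v = \<bar>h x - h y\<bar> / \<bar>x - y\<bar> \<and> x \<in> J \<and> y \<in> J \<and> x \<noteq> y) \<longleftrightarrow>
        (\<exists>x y. v = \<bar>h' x - h' y\<bar> / \<bar>x - y\<bar> \<and> x \<in> J \<and> y \<in> J \<and> x \<noteq> y)" for v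
    using assms by metis
  then show ?thesis
    unfolding dcoef_def by simp
qed

lemma dcoef_le:
  assumes "x \<in> J" and "y \<in> J" and "x \<noteq> y"
  shows "dcoef h J * \<bar>x - y\<bar> \<le> \<bar>h x - h y\<bar>"
proof -
  have "dcoef h J \<le> \<bar>h x - h y\<bar> / \<bar>x - y\<bar>"
    unfolding dcoef_def using assms by (intro cInf_lower bdd_belowI[where m=0]) auto
  then show ?thesis
    using assms(3) by (simp add: pos_le_divide_eq)
qed

lemma dcoef_greatest:
  assumes "x0 \<in> J" and "y0 \<in> J" and "x0 \<noteq> y0"
    and "\<And>x y. x \<in> J \<Longrightarrow> y \<in> J \<Longrightarrow> x \<noteq> y \<Longrightarrow> c * \<bar>x - y\<bar> \<le> \<bar>h x - h y\<bar>"
  shows "c \<le> dcoef h J"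
  unfolding dcoef_def using assms by (intro cInf_greatest) (auto simp: pos_le_divide_eq)

lemma continuous_on_nonzero_sign:
  fixes \<psi> :: "'a::topological_space \<Rightarrow> real"
  assumes "continuous_on S \<psi>" and "connected S" and "\<And>s. s \<in> S \<Longrightarrow> \<psi> s \<noteq> 0"
  shows "(\<forall>s\<in>S. 0 < \<psi> s) \<or> (\<forall>s\<in>S. \<psi> s < 0)"
proof (rule ccontr)
  assume "\<not> ?thesis"
  then obtain s1 s2 where "s1 \<in> S" "s2 \<in> S" "\<psi> s1 \<le> 0" "0 \<le> \<psi> s2"
    by (auto simp: not_less)
  moreover have "connected (\<psi> ` S)"
    using assms(1,2) by (rule connected_continuous_image)
  ultimately have "0 \<in> \<psi> ` S"
    unfolding connected_iff_interval by blast
  with assms(3) show False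
    by auto
qed

lemma abs_expectation_ge:
  fixes \<psi> :: "'b::topological_space \<Rightarrow> real"
  assumes M: "prob_space M" and "continuous_on S \<psi>" and "connected S"
    and bound: "\<And>s. s \<in> S \<Longrightarrow> c \<le> \<bar>\<psi> s\<bar>" and "0 < c"
    and X: "\<And>\<omega>. \<omega> \<in> space M \<Longrightarrow> X \<omega> \<in> S" and int: "integrable M (\<lambda>\<omega>. \<psi> (X \<omega>))"
  shows "c \<le> \<bar>integral\<^sup>L M (\<lambda>\<omega>. \<psi> (X \<omega>))\<bar>"
proof -
  interpret prob_space M by fact
  have "(\<forall>s\<in>S. 0 < \<psi> s) \<or> (\<forall>s\<in>S. \<psi> s < 0)"
    using assms(2,3) bound \<open>0 < c\<close> by (intro continuous_on_nonzero_sign) force+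
  then show ?thesis
  proof
    assume "\<forall>s\<in>S. 0 < \<psi> s"
    then have "c \<le> integral\<^sup>L M (\<lambda>\<omega>. \<psi> (X \<omega>))"
      using bound X by (intro integral_ge_const[OF int] AE_I2) force
    then show ?thesis by linarith
  next
    assume "\<forall>s\<in>S. \<psi> s < 0"
    then have "integral\<^sup>L M (\<lambda>\<omega>. \<psi> (X \<omega>)) \<le> - c"
      using bound X by (intro integral_le_const[OF int] AE_I2) force
    then show ?thesis by linarith
  qed
qed

lemma dcoef_expectation_shift_ge:
  fixes \<phi> :: "real \<Rightarrow> real" and \<xi> :: "'a \<Rightarrow> real"
  assumes M: "prob_space M" and \<xi>: "\<xi> \<in> borel_measurable M"
    and \<xi>_bdd: "\<And>\<omega>. \<omega> \<in> space M \<Longrightarrow> \<bar>\<xi> \<omega>\<bar> \<le> r"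
    and \<phi>: "continuous_on {-R0..R0} \<phi>" and "0 < R" and "R + r \<le> R0"
  shows "dcoef \<phi> {-R0..R0} \<le> dcoef (\<lambda>x. integral\<^sup>L M (\<lambda>\<omega>. \<phi> (x + \<xi> \<omega>))) {-R..R}"
proof (rule dcoef_greatest[of R _ "-R"])
  fix x y assume x: "x \<in> {-R..R}" and y: "y \<in> {-R..R}" and "x \<noteq> y"
  let ?D = "dcoef \<phi> {-R0..R0}" and ?\<psi> = "\<lambda>s. \<phi> (x + s) - \<phi> (y + s)"
  have shift: "u + \<xi> \<omega> \<in> {-R0..R0}" if "u \<in> {-R..R}" "\<omega> \<in> space M" for u \<omega>
    using that \<xi>_bdd[OF that(2)] \<open>R + r \<le> R0\<close> by auto
  have int: "integrable M (\<lambda>\<omega>. \<phi> (u + \<xi> \<omega>))" if "u \<in> {-R..R}" for u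
    using shift[OF that] \<xi>
    by (intro integrable_continuous_on_comp[OF prob_space.finite_measure[OF M] \<phi> compact_Icc]) auto
  have diff: "integral\<^sup>L M (\<lambda>\<omega>. \<phi> (x + \<xi> \<omega>)) - integral\<^sup>L M (\<lambda>\<omega>. \<phi> (y + \<xi> \<omega>))
      = integral\<^sup>L M (\<lambda>\<omega>. ?\<psi> (\<xi> \<omega>))"
    using int[OF x] int[OF y] by simp
  show "?D * \<bar>x - y\<bar> \<le> \<bar>integral\<^sup>L M (\<lambda>\<omega>. \<phi> (x + \<xi> \<omega>)) - integral\<^sup>L M (\<lambda>\<omega>. \<phi> (y + \<xi> \<omega>))\<bar>"
  proof (cases "?D * \<bar>x - y\<bar> \<le> 0")
    case False
    show ?thesis
      unfolding diff
    proof (rule abs_expectation_ge[OF M, where S="{-r..r}" and \<psi>="?\<psi>" and X=\<xi>])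
      show "continuous_on {-r..r} ?\<psi>"
        using x y \<open>R + r \<le> R0\<close>
        by (intro continuous_intros continuous_on_compose2[OF \<phi>]) auto
      show "?D * \<bar>x - y\<bar> \<le> \<bar>?\<psi> s\<bar>" if "s \<in> {-r..r}" for s
        using that x y \<open>R + r \<le> R0\<close> \<open>x \<noteq> y\<close> dcoef_le[of "x + s" "{-R0..R0}" "y + s" \<phi>] by auto
      show "\<xi> \<omega> \<in> {-r..r}" if "\<omega> \<in> space M" for \<omega>
        using \<xi>_bdd[OF that] by auto
      show "integrable M (\<lambda>\<omega>. ?\<psi> (\<xi> \<omega>))"
        using int[OF x] int[OF y] by simp
    qed (use False in simp_all)
  qed simp
qed (use \<open>0 < R\<close> in auto)

lemma dcoef_Re_integral_shift_ge:
  fixes f :: "complex \<Rightarrow> complex" and \<xi> :: "'a \<Rightarrow> real"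
  assumes M: "prob_space M" and \<xi>: "\<xi> \<in> borel_measurable M"
    and \<xi>_bdd: "\<And>\<omega>. \<omega> \<in> space M \<Longrightarrow> \<bar>\<xi> \<omega>\<bar> \<le> r"
    and f_cont: "continuous_on (cball 0 R0) f" and "0 < R" and "R + r \<le> R0"
  shows "dcoef (\<lambda>x. Re (f (of_real x))) {-R0..R0}
    \<le> dcoef (\<lambda>x. Re (integral\<^sup>L M (\<lambda>\<omega>. f (of_real x + of_real (\<xi> \<omega>))))) {-R..R}"
proof -
  have "dcoef (\<lambda>x. Re (f (of_real x))) {-R0..R0}
      \<le> dcoef (\<lambda>x. integral\<^sup>L M (\<lambda>\<omega>. Re (f (of_real (x + \<xi> \<omega>))))) {-R..R}"
    by (rule dcoef_expectation_shift_ge[OF M \<xi> \<xi>_bdd continuous_on_Re_of_real[OF f_cont] assms(5,6)])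
  also have "\<dots> = dcoef (\<lambda>x. Re (integral\<^sup>L M (\<lambda>\<omega>. f (of_real x + of_real (\<xi> \<omega>))))) {-R..R}"
    using \<open>R + r \<le> R0\<close>
    by (intro dcoef_cong Re_integral_shift[OF prob_space.finite_measure[OF M] \<xi> \<xi>_bdd f_cont, symmetric]) auto
  finally show ?thesis .
qed

section \<open>Sub-Gaussian tails of weighted sums\<close>

definition subgaussian_tail :: "'a measure \<Rightarrow> nat \<Rightarrow> (nat \<Rightarrow> 'a \<Rightarrow> real) \<Rightarrow> real \<Rightarrow> real \<Rightarrow> bool" where
  "subgaussian_tail M n Z \<sigma> c \<longleftrightarrow> (\<forall>t\<ge>0. \<forall>a::nat \<Rightarrow> real.
     measure M {\<omega> \<in> space M. \<bar>\<Sum>i<n. a i * Z i \<omega>\<bar> > t * sqrt (\<Sum>i<n. (a i)\<^sup>2)}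
       \<le> c * exp (- t\<^sup>2 / (2 * \<sigma>\<^sup>2)))"

lemma subgaussian_tail_cong:
  assumes "\<And>i \<omega>. i < n \<Longrightarrow> \<omega> \<in> space M \<Longrightarrow> Z i \<omega> = Z' i \<omega>"
  shows "subgaussian_tail M n Z \<sigma> c \<longleftrightarrow> subgaussian_tail M n Z' \<sigma> c"
proof -
  have "{\<omega> \<in> space M. \<bar>\<Sum>i<n. a i * Z i \<omega>\<bar> > s} = {\<omega> \<in> space M. \<bar>\<Sum>i<n. a i * Z' i \<omega>\<bar> > s}" for a s
    using assms by (intro Collect_cong conj_cong refl) (auto intro!: sum.cong)
  then show ?thesis
    unfolding subgaussian_tail_def by simp
qed

lemma subgaussian_tail_bounded_indep:
  fixes Z :: "nat \<Rightarrow> 'a \<Rightarrow> real"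
  assumes M: "prob_space M" and indep: "prob_space.indep_vars M (\<lambda>_. borel) Z {..<n}"
    and bdd: "\<And>i \<omega>. i < n \<Longrightarrow> \<omega> \<in> space M \<Longrightarrow> \<bar>Z i \<omega>\<bar> \<le> B" and "0 < B"
    and mean: "\<And>i. i < n \<Longrightarrow> integral\<^sup>L M (Z i) = 0"
  shows "subgaussian_tail M n Z B 2"
  unfolding subgaussian_tail_def
proof (intro allI impI)
  interpret prob_space M by fact
  fix t :: real and a :: "nat \<Rightarrow> real" assume "0 \<le> t"
  define S where "S = (\<Sum>i<n. (a i)\<^sup>2)"
  show "prob {\<omega> \<in> space M. \<bar>\<Sum>i<n. a i * Z i \<omega>\<bar> > t * sqrt S} \<le> 2 * exp (- t\<^sup>2 / (2 * B\<^sup>2))"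
  proof (cases "S = 0")
    case True
    then have "\<forall>i\<in>{..<n}. a i = 0"
      unfolding S_def by (subst (asm) sum_nonneg_eq_0_iff) auto
    with True show ?thesis
      by simp
  next
    case False
    then have "0 < S"
      unfolding S_def by (metis sum_nonneg zero_le_power2 order_le_less)
    interpret H: Hoeffding_ineq M "{..<n}" "\<lambda>i \<omega>. a i * Z i \<omega>" "\<lambda>i. - (\<bar>a i\<bar> * B)" "\<lambda>i. \<bar>a i\<bar> * B" 0
    proof unfold_locales
      show "indep_vars (\<lambda>_. borel) (\<lambda>i \<omega>. a i * Z i \<omega>) {..<n}"
        by (rule indep_vars_compose2[OF indep]) auto
      show "AE \<omega> in M. a i * Z i \<omega> \<in> {- (\<bar>a i\<bar> * B)..\<bar>a i\<bar> * B}" if "i \<in> {..<n}" for i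
      proof (rule AE_I2)
        fix \<omega> assume "\<omega> \<in> space M"
        with that bdd have "\<bar>a i * Z i \<omega>\<bar> \<le> \<bar>a i\<bar> * B"
          by (simp add: abs_mult mult_left_mono)
        then show "a i * Z i \<omega> \<in> {- (\<bar>a i\<bar> * B)..\<bar>a i\<bar> * B}"
          by (simp add: abs_le_iff)
      qed
      show "0 \<equiv> \<Sum>i<n. expectation (\<lambda>\<omega>. a i * Z i \<omega>)"
        using mean by simp
    qed simp
    have width: "(\<Sum>i<n. (\<bar>a i\<bar> * B - - (\<bar>a i\<bar> * B))\<^sup>2) = 4 * B\<^sup>2 * S"
      unfolding S_def sum_distrib_left by (intro sum.cong) (auto simp: power2_eq_square)
    have "prob {\<omega> \<in> space M. \<bar>\<Sum>i<n. a i * Z i \<omega>\<bar> > t * sqrt S}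
        \<le> prob {\<omega> \<in> space M. \<bar>(\<Sum>i<n. a i * Z i \<omega>) - 0\<bar> \<ge> t * sqrt S}"
      using indep unfolding indep_vars_def by (intro finite_measure_mono) auto
    also have "\<dots> \<le> 2 * exp (- 2 * (t * sqrt S)\<^sup>2 / (\<Sum>i<n. (\<bar>a i\<bar> * B - - (\<bar>a i\<bar> * B))\<^sup>2))"
      using \<open>0 \<le> t\<close> \<open>0 < S\<close> \<open>0 < B\<close> width by (intro H.Hoeffding_ineq_abs_ge) auto
    also have "\<dots> = 2 * exp (- t\<^sup>2 / (2 * B\<^sup>2))"
      unfolding width using \<open>0 < S\<close> \<open>0 < B\<close> by (simp add: power_mult_distrib field_simps)
    finally show ?thesis .
  qed
qed

lemma measure_abs_add_gt_le:
  fixes Y Z :: "'a \<Rightarrow> real"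
  assumes "finite_measure M" and [measurable]: "Y \<in> borel_measurable M" "Z \<in> borel_measurable M"
  shows "measure M {\<omega> \<in> space M. s < \<bar>Y \<omega> + Z \<omega>\<bar>}
    \<le> measure M {\<omega> \<in> space M. s / 2 < \<bar>Y \<omega>\<bar>} + measure M {\<omega> \<in> space M. s / 2 < \<bar>Z \<omega>\<bar>}"
proof -
  interpret finite_measure M by fact
  have "measure M {\<omega> \<in> space M. s < \<bar>Y \<omega> + Z \<omega>\<bar>}
      \<le> measure M ({\<omega> \<in> space M. s / 2 < \<bar>Y \<omega>\<bar>} \<union> {\<omega> \<in> space M. s / 2 < \<bar>Z \<omega>\<bar>})"
    by (intro finite_measure_mono) auto
  also have "\<dots> \<le> measure M {\<omega> \<in> space M. s / 2 < \<bar>Y \<omega>\<bar>} + measure M {\<omega> \<in> space M. s / 2 < \<bar>Z \<omega>\<bar>}"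
    by (rule measure_Un_le) measurable
  finally show ?thesis .
qed

lemma exp_gaussian_half_le:
  fixes t :: real
  assumes "0 < \<sigma>" and "\<sigma> \<le> \<tau>"
  shows "exp (- (t / 2)\<^sup>2 / (2 * \<sigma>\<^sup>2)) \<le> exp (- t\<^sup>2 / (2 * (2 * \<tau>)\<^sup>2))"
proof -
  have "t\<^sup>2 / (8 * \<tau>\<^sup>2) \<le> t\<^sup>2 / (8 * \<sigma>\<^sup>2)"
    using assms by (intro divide_left_mono mult_left_mono power_mono) auto
  then show ?thesis
    by (simp add: power_divide power_mult_distrib)
qed

lemma subgaussian_tail_add:
  assumes "finite_measure M"
    and meas: "\<And>i. i < n \<Longrightarrow> Y i \<in> borel_measurable M" "\<And>i. i < n \<Longrightarrow> Z i \<in> borel_measurable M"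
    and Y: "subgaussian_tail M n Y \<sigma>\<^sub>1 c\<^sub>1" and Z: "subgaussian_tail M n Z \<sigma>\<^sub>2 c\<^sub>2"
    and "0 < \<sigma>\<^sub>1" "0 < \<sigma>\<^sub>2" "0 \<le> c\<^sub>1" "0 \<le> c\<^sub>2"
  shows "subgaussian_tail M n (\<lambda>i \<omega>. Y i \<omega> + Z i \<omega>) (2 * max \<sigma>\<^sub>1 \<sigma>\<^sub>2) (c\<^sub>1 + c\<^sub>2)"
  unfolding subgaussian_tail_def
proof (intro allI impI)
  fix t :: real and a :: "nat \<Rightarrow> real" assume "0 \<le> t"
  let ?S = "sqrt (\<Sum>i<n. (a i)\<^sup>2)" and ?\<sigma> = "max \<sigma>\<^sub>1 \<sigma>\<^sub>2"
  let ?Y = "\<lambda>\<omega>. \<Sum>i<n. a i * Y i \<omega>" and ?Z = "\<lambda>\<omega>. \<Sum>i<n. a i * Z i \<omega>"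
  have [measurable]: "?Y \<in> borel_measurable M" "?Z \<in> borel_measurable M"
    using meas by (auto intro!: borel_measurable_sum borel_measurable_times)
  have "measure M {\<omega> \<in> space M. \<bar>\<Sum>i<n. a i * (Y i \<omega> + Z i \<omega>)\<bar> > t * ?S}
      = measure M {\<omega> \<in> space M. t * ?S < \<bar>?Y \<omega> + ?Z \<omega>\<bar>}"
    by (simp add: distrib_left sum.distrib)
  also have "\<dots> \<le> measure M {\<omega> \<in> space M. t / 2 * ?S < \<bar>?Y \<omega>\<bar>} + measure M {\<omega> \<in> space M. t / 2 * ?S < \<bar>?Z \<omega>\<bar>}"
    using measure_abs_add_gt_le[OF assms(1), of ?Y ?Z "t * ?S"] by simp
  also have "\<dots> \<le> c\<^sub>1 * exp (- (t / 2)\<^sup>2 / (2 * \<sigma>\<^sub>1\<^sup>2)) + c\<^sub>2 * exp (- (t / 2)\<^sup>2 / (2 * \<sigma>\<^sub>2\<^sup>2))"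
    using \<open>0 \<le> t\<close> by (intro add_mono Y[unfolded subgaussian_tail_def, rule_format, of "t / 2" a]
        Z[unfolded subgaussian_tail_def, rule_format, of "t / 2" a]) simp_all
  also have "\<dots> \<le> c\<^sub>1 * exp (- t\<^sup>2 / (2 * (2 * ?\<sigma>)\<^sup>2)) + c\<^sub>2 * exp (- t\<^sup>2 / (2 * (2 * ?\<sigma>)\<^sup>2))"
    using assms(6-9) by (intro add_mono mult_left_mono exp_gaussian_half_le) auto
  finally show "measure M {\<omega> \<in> space M. \<bar>\<Sum>i<n. a i * (Y i \<omega> + Z i \<omega>)\<bar> > t * ?S}
      \<le> (c\<^sub>1 + c\<^sub>2) * exp (- t\<^sup>2 / (2 * (2 * ?\<sigma>)\<^sup>2))"
    by (simp add: distrib_right)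
qed

lemma indep_vars_combine_pairs:
  fixes \<xi> \<epsilon> :: "nat \<Rightarrow> 'a \<Rightarrow> real" and \<Psi> :: "nat \<Rightarrow> real \<Rightarrow> real \<Rightarrow> real"
  assumes M: "prob_space M"
    and indep: "prob_space.indep_vars M (\<lambda>_. borel) (\<lambda>k. case k of Inl i \<Rightarrow> \<xi> i | Inr i \<Rightarrow> \<epsilon> i)
                  (Inl ` I \<union> Inr ` I)"
    and \<Psi>: "\<And>i. case_prod (\<Psi> i) \<in> borel_measurable (borel \<Otimes>\<^sub>M borel)"
  shows "prob_space.indep_vars M (\<lambda>_. borel) (\<lambda>i \<omega>. \<Psi> i (\<xi> i \<omega>) (\<epsilon> i \<omega>)) I"
proof -
  interpret prob_space M by fact
  define Z where "Z = (\<lambda>k. case k of Inl i \<Rightarrow> \<xi> i | Inr i \<Rightarrow> \<epsilon> i)"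
  define K where "K = (\<lambda>i::nat. {Inl i, Inr i :: nat + nat})"
  have "indep_vars (\<lambda>i. PiM (K i) (\<lambda>_. borel)) (\<lambda>i \<omega>. restrict (\<lambda>k. Z k \<omega>) (K i)) I"
    by (rule indep_vars_restrict[OF indep[folded Z_def]]) (auto simp: K_def disjoint_family_on_def)
  then have "indep_vars (\<lambda>_. borel) (\<lambda>i \<omega>. (\<lambda>h. \<Psi> i (h (Inl i)) (h (Inr i))) (restrict (\<lambda>k. Z k \<omega>) (K i))) I"
  proof (rule indep_vars_compose2)
    fix i
    have "(\<lambda>h. (h (Inl i), h (Inr i))) \<in> PiM (K i) (\<lambda>_. borel) \<rightarrow>\<^sub>M borel \<Otimes>\<^sub>M borel"
      by (intro measurable_Pair measurable_component_singleton) (auto simp: K_def)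
    from measurable_compose[OF this \<Psi>]
    show "(\<lambda>h. \<Psi> i (h (Inl i)) (h (Inr i))) \<in> borel_measurable (PiM (K i) (\<lambda>_. borel))"
      by simp
  qed
  then show ?thesis
    by (rule indep_vars_cong[THEN iffD1, rotated -1]) (auto simp: K_def Z_def)
qed

context
  fixes M :: "'a measure" and n :: nat and \<xi> \<epsilon> :: "nat \<Rightarrow> 'a \<Rightarrow> real"
    and \<Phi> :: "nat \<Rightarrow> real \<Rightarrow> real" and B :: real
  assumes M: "prob_space M"
    and \<xi>_meas: "\<And>i. i < n \<Longrightarrow> \<xi> i \<in> borel_measurable M"
    and \<epsilon>_meas: "\<And>i. i < n \<Longrightarrow> \<epsilon> i \<in> borel_measurable M"
    and indep: "prob_space.indep_vars M (\<lambda>_. borel) (\<lambda>k. case k of Inl i \<Rightarrow> \<xi> i | Inr i \<Rightarrow> \<epsilon> i)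
                  (Inl ` {..<n} \<union> Inr ` {..<n})"
    and \<Phi>_meas: "\<And>i. \<Phi> i \<in> borel_measurable borel"
    and \<Phi>_bdd: "\<And>i s. i < n \<Longrightarrow> \<bar>\<Phi> i s\<bar> \<le> B"
    and \<Phi>_mean: "\<And>i. i < n \<Longrightarrow> integral\<^sup>L M (\<lambda>\<omega>. \<Phi> i (\<xi> i \<omega>)) = 0"
begin

lemma measurable_bounded_part: "i < n \<Longrightarrow> (\<lambda>\<omega>. \<Phi> i (\<xi> i \<omega>)) \<in> borel_measurable M"
  using measurable_compose[OF \<xi>_meas \<Phi>_meas] by (simp add: comp_def)

lemma subgaussian_tail_bounded_part: "subgaussian_tail M n (\<lambda>i \<omega>. \<Phi> i (\<xi> i \<omega>)) (\<bar>B\<bar> + 1) 2"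
proof (rule subgaussian_tail_bounded_indep[OF M])
  note [measurable] = \<Phi>_meas
  show "prob_space.indep_vars M (\<lambda>_. borel) (\<lambda>i \<omega>. \<Phi> i (\<xi> i \<omega>)) {..<n}"
    by (rule indep_vars_combine_pairs[OF M indep, where \<Psi>="\<lambda>i u v. \<Phi> i u"]) measurable
  show "\<bar>\<Phi> i (\<xi> i \<omega>)\<bar> \<le> \<bar>B\<bar> + 1" if "i < n" for i \<omega>
    using \<Phi>_bdd[OF that, of "\<xi> i \<omega>"] by linarith
qed (use \<Phi>_mean in auto)

lemma subgaussian_tail_bounded_plus_subgaussian:
  assumes "subgaussian_tail M n \<epsilon> \<sigma> c" and "0 < \<sigma>" and "0 \<le> c"
  shows "subgaussian_tail M n (\<lambda>i \<omega>. \<Phi> i (\<xi> i \<omega>) + \<epsilon> i \<omega>) (2 * max (\<bar>B\<bar> + 1) \<sigma>) (2 + c)"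
  using assms measurable_bounded_part \<epsilon>_meas
  by (intro subgaussian_tail_add[OF prob_space.finite_measure[OF M] _ _ subgaussian_tail_bounded_part]) auto

lemma subgaussian_tail_bounded_plus_bounded:
  assumes \<epsilon>_bdd: "\<And>i \<omega>. i < n \<Longrightarrow> \<omega> \<in> space M \<Longrightarrow> \<bar>\<epsilon> i \<omega>\<bar> \<le> B'"
    and \<epsilon>_mean: "\<And>i. i < n \<Longrightarrow> integral\<^sup>L M (\<epsilon> i) = 0"
  shows "subgaussian_tail M n (\<lambda>i \<omega>. \<Phi> i (\<xi> i \<omega>) + \<epsilon> i \<omega>) (\<bar>B\<bar> + \<bar>B'\<bar> + 1) 2"
proof (rule subgaussian_tail_bounded_indep[OF M])
  interpret prob_space M by (fact M)
  note [measurable] = \<Phi>_meas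
  show "indep_vars (\<lambda>_. borel) (\<lambda>i \<omega>. \<Phi> i (\<xi> i \<omega>) + \<epsilon> i \<omega>) {..<n}"
    by (rule indep_vars_combine_pairs[OF M indep, where \<Psi>="\<lambda>i u v. \<Phi> i u + v"]) measurable
  show bdd: "\<bar>\<Phi> i (\<xi> i \<omega>) + \<epsilon> i \<omega>\<bar> \<le> \<bar>B\<bar> + \<bar>B'\<bar> + 1" if "i < n" "\<omega> \<in> space M" for i \<omega>
    using \<Phi>_bdd[OF that(1), of "\<xi> i \<omega>"] \<epsilon>_bdd[OF that] by linarith
  show "integral\<^sup>L M (\<lambda>\<omega>. \<Phi> i (\<xi> i \<omega>) + \<epsilon> i \<omega>) = 0" if "i < n" for i
  proof -
    have "integrable M (\<lambda>\<omega>. \<Phi> i (\<xi> i \<omega>))"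
      using that \<Phi>_bdd by (intro integrable_const_bound[where B=B] AE_I2 measurable_bounded_part) auto
    moreover have "integrable M (\<epsilon> i)"
      using that \<epsilon>_bdd by (intro integrable_const_bound[where B=B'] AE_I2 \<epsilon>_meas) auto
    ultimately show ?thesis
      using \<Phi>_mean[OF that] \<epsilon>_mean[OF that] by simp
  qed
qed simp

end

section \<open>The noise of the model\<close>

lemma
  fixes \<phi> :: "real \<Rightarrow> real" and X Y :: "'a \<Rightarrow> real" and x :: real
  assumes M: "prob_space M" and \<phi>: "\<phi> \<in> borel_measurable borel" and \<phi>_bdd: "\<And>s. \<bar>\<phi> s\<bar> \<le> B"
    and X: "X \<in> borel_measurable M" and Y: "Y \<in> borel_measurable M"
    and same_distr: "distr M borel X = distr M borel Y"
  defines "\<Phi> \<equiv> \<lambda>s. \<phi> (x + s) - integral\<^sup>L M (\<lambda>\<omega>. \<phi> (x + Y \<omega>))"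
  shows centered_shift_measurable: "\<Phi> \<in> borel_measurable borel"
    and centered_shift_bounded: "\<bar>\<Phi> s\<bar> \<le> 2 * B"
    and centered_shift_mean: "integral\<^sup>L M (\<lambda>\<omega>. \<Phi> (X \<omega>)) = 0"
proof -
  interpret prob_space M by fact
  note [measurable] = \<phi> X Y
  show \<Phi>_meas: "\<Phi> \<in> borel_measurable borel"
    unfolding \<Phi>_def by measurable
  have int: "integrable M (\<lambda>\<omega>. \<phi> (x + Y \<omega>))"
    using \<phi>_bdd by (intro integrable_const_bound[where B=B] AE_I2) auto
  have "\<bar>integral\<^sup>L M (\<lambda>\<omega>. \<phi> (x + Y \<omega>))\<bar> \<le> integral\<^sup>L M (\<lambda>\<omega>. \<bar>\<phi> (x + Y \<omega>)\<bar>)"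
    using integral_norm_bound[of M "\<lambda>\<omega>. \<phi> (x + Y \<omega>)"] by simp
  also have "\<dots> \<le> B"
    using int \<phi>_bdd by (intro integral_le_const) auto
  finally show "\<bar>\<Phi> s\<bar> \<le> 2 * B"
    unfolding \<Phi>_def using \<phi>_bdd[of "x + s"] by linarith
  have "integral\<^sup>L M (\<lambda>\<omega>. \<Phi> (X \<omega>)) = integral\<^sup>L (distr M borel X) \<Phi>"
    by (rule integral_distr[symmetric]) (use \<Phi>_meas in simp_all)
  also have "\<dots> = integral\<^sup>L M (\<lambda>\<omega>. \<Phi> (Y \<omega>))"
    unfolding same_distr by (rule integral_distr) (use \<Phi>_meas in simp_all)
  also have "\<dots> = 0"
    unfolding \<Phi>_def using int by (simp add: prob_space)
  finally show "integral\<^sup>L M (\<lambda>\<omega>. \<Phi> (X \<omega>)) = 0" .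
qed

lemma shifted_noise_decomposition:
  fixes f :: "complex \<Rightarrow> complex" and \<xi> :: "nat \<Rightarrow> 'a \<Rightarrow> real" and x :: "nat \<Rightarrow> real"
  assumes M: "prob_space M" and "0 < n"
    and \<xi>_meas: "\<And>i. i < n \<Longrightarrow> \<xi> i \<in> borel_measurable M"
    and \<xi>_bdd: "\<And>i \<omega>. i < n \<Longrightarrow> \<omega> \<in> space M \<Longrightarrow> \<bar>\<xi> i \<omega>\<bar> \<le> r"
    and \<xi>_distr: "\<And>i. i < n \<Longrightarrow> distr M borel (\<xi> i) = distr M borel (\<xi> 0)"
    and x: "\<And>i. i < n \<Longrightarrow> \<bar>x i\<bar> \<le> R" and "R + r \<le> R0"
    and f_cont: "continuous_on (cball 0 R0) f"
  obtains \<Phi> B where "\<And>i. \<Phi> i \<in> borel_measurable borel" and "\<And>i s. i < n \<Longrightarrow> \<bar>\<Phi> i s\<bar> \<le> B"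
    and "\<And>i. i < n \<Longrightarrow> integral\<^sup>L M (\<lambda>\<omega>. \<Phi> i (\<xi> i \<omega>)) = 0"
    and "\<And>i \<omega>. i < n \<Longrightarrow> \<omega> \<in> space M \<Longrightarrow>
      Re (f (of_real (x i + \<xi> i \<omega>))) - Re (integral\<^sup>L M (\<lambda>\<omega>'. f (of_real (x i) + of_real (\<xi> 0 \<omega>'))))
        = \<Phi> i (\<xi> i \<omega>)"
proof -
  interpret prob_space M by fact
  note f_real_cont = continuous_on_Re_of_real[OF f_cont]
  \<comment> \<open>Extending by 0 makes \<open>\<phi>\<close> Borel on all of \<open>\<real>\<close>; only its values on \<open>[-R0, R0]\<close> are ever used.\<close>
  define \<phi> where "\<phi> s = (if s \<in> {-R0..R0} then Re (f (of_real s)) else 0)" for s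
  have \<phi>_meas: "\<phi> \<in> borel_measurable borel"
    unfolding \<phi>_def by (intro borel_measurable_continuous_on_if f_real_cont continuous_on_const) simp
  obtain B where B: "\<And>s. \<bar>\<phi> s\<bar> \<le> B"
  proof -
    obtain B where "0 < B" "\<And>y. y \<in> (\<lambda>s. Re (f (of_real s))) ` {-R0..R0} \<Longrightarrow> norm y \<le> B"
      using compact_imp_bounded[OF compact_continuous_image[OF f_real_cont compact_Icc]]
      unfolding bounded_pos by blast
    then show thesis
      by (intro that[of B]) (auto simp: \<phi>_def)
  qed
  have \<xi>0: "\<xi> 0 \<in> borel_measurable M"
    using \<xi>_meas \<open>0 < n\<close> by blast
  define \<Phi> where "\<Phi> i s = \<phi> (x i + s) - integral\<^sup>L M (\<lambda>\<omega>. \<phi> (x i + \<xi> 0 \<omega>))" for i s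
  have shift: "x i + \<xi> j \<omega> \<in> {-R0..R0}" if "i < n" "j < n" "\<omega> \<in> space M" for i j \<omega>
    using x[OF that(1)] \<xi>_bdd[OF that(2,3)] \<open>R + r \<le> R0\<close> by auto
  show thesis
  proof (rule that[of \<Phi> "2 * B"])
    show "\<Phi> i \<in> borel_measurable borel" for i
      unfolding \<Phi>_def using centered_shift_measurable[OF M \<phi>_meas B] \<xi>0 by blast
    show "\<bar>\<Phi> i s\<bar> \<le> 2 * B" for i s
      unfolding \<Phi>_def using centered_shift_bounded[OF M \<phi>_meas B] \<xi>0 by blast
    show "integral\<^sup>L M (\<lambda>\<omega>. \<Phi> i (\<xi> i \<omega>)) = 0" if "i < n" for i
      unfolding \<Phi>_def by (rule centered_shift_mean[OF M \<phi>_meas B \<xi>_meas[OF that] \<xi>0 \<xi>_distr[OF that]])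
    show "Re (f (of_real (x i + \<xi> i \<omega>))) - Re (integral\<^sup>L M (\<lambda>\<omega>'. f (of_real (x i) + of_real (\<xi> 0 \<omega>'))))
        = \<Phi> i (\<xi> i \<omega>)" if "i < n" "\<omega> \<in> space M" for i \<omega>
    proof -
      have "Re (integral\<^sup>L M (\<lambda>\<omega>'. f (of_real (x i) + of_real (\<xi> 0 \<omega>'))))
          = integral\<^sup>L M (\<lambda>\<omega>'. Re (f (of_real (x i + \<xi> 0 \<omega>'))))"
        using x[OF that(1)] \<xi>_bdd \<open>0 < n\<close> \<open>R + r \<le> R0\<close>
        by (intro Re_integral_shift[OF finite_measure \<xi>0 _ f_cont]) auto
      also have "\<dots> = integral\<^sup>L M (\<lambda>\<omega>'. \<phi> (x i + \<xi> 0 \<omega>'))"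
        using shift[OF \<open>i < n\<close> \<open>0 < n\<close>] by (intro Bochner_Integration.integral_cong) (simp_all add: \<phi>_def)
      finally have "Re (integral\<^sup>L M (\<lambda>\<omega>'. f (of_real (x i) + of_real (\<xi> 0 \<omega>'))))
          = integral\<^sup>L M (\<lambda>\<omega>'. \<phi> (x i + \<xi> 0 \<omega>'))" .
      then show ?thesis
        using shift[OF that(1,1,2)] by (simp add: \<Phi>_def \<phi>_def)
    qed
  qed
qed

lemma subgaussian_tail_shifted_noise:
  fixes f :: "complex \<Rightarrow> complex" and \<xi> \<epsilon> :: "nat \<Rightarrow> 'a \<Rightarrow> real" and x :: "nat \<Rightarrow> real"
  assumes M: "prob_space M" and "0 < n"
    and \<xi>_meas: "\<And>i. i < n \<Longrightarrow> \<xi> i \<in> borel_measurable M"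
    and \<epsilon>_meas: "\<And>i. i < n \<Longrightarrow> \<epsilon> i \<in> borel_measurable M"
    and indep: "prob_space.indep_vars M (\<lambda>_. borel) (\<lambda>k. case k of Inl i \<Rightarrow> \<xi> i | Inr i \<Rightarrow> \<epsilon> i)
                  (Inl ` {..<n} \<union> Inr ` {..<n})"
    and \<xi>_bdd: "\<And>i \<omega>. i < n \<Longrightarrow> \<omega> \<in> space M \<Longrightarrow> \<bar>\<xi> i \<omega>\<bar> \<le> r"
    and \<xi>_distr: "\<And>i. i < n \<Longrightarrow> distr M borel (\<xi> i) = distr M borel (\<xi> 0)"
    and x: "\<And>i. i < n \<Longrightarrow> \<bar>x i\<bar> \<le> R" and "R + r \<le> R0"
    and f_cont: "continuous_on (cball 0 R0) f"
  defines "\<delta> \<equiv> \<lambda>i \<omega>. Re (f (of_real (x i + \<xi> i \<omega>)))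
    - Re (integral\<^sup>L M (\<lambda>\<omega>'. f (of_real (x i) + of_real (\<xi> 0 \<omega>')))) + \<epsilon> i \<omega>"
  shows subgaussian_tail_shifted_noise_subgaussian:
      "subgaussian_tail M n \<epsilon> \<sigma> c \<Longrightarrow> 0 < \<sigma> \<Longrightarrow> 0 < c \<Longrightarrow>
        \<exists>\<sigma>' c'. 0 < \<sigma>' \<and> 0 < c' \<and> subgaussian_tail M n \<delta> \<sigma>' c'"
    and subgaussian_tail_shifted_noise_bounded:
      "(\<And>i \<omega>. i < n \<Longrightarrow> \<omega> \<in> space M \<Longrightarrow> \<bar>\<epsilon> i \<omega>\<bar> \<le> B') \<Longrightarrow>
        (\<And>i. i < n \<Longrightarrow> integral\<^sup>L M (\<epsilon> i) = 0) \<Longrightarrow>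
        \<exists>\<sigma>'. 0 < \<sigma>' \<and> subgaussian_tail M n \<delta> \<sigma>' 2"
proof -
  obtain \<Phi> B where \<Phi>_meas: "\<And>i. \<Phi> i \<in> borel_measurable borel"
    and \<Phi>_bdd: "\<And>i s. i < n \<Longrightarrow> \<bar>\<Phi> i s\<bar> \<le> B"
    and \<Phi>_mean: "\<And>i. i < n \<Longrightarrow> integral\<^sup>L M (\<lambda>\<omega>. \<Phi> i (\<xi> i \<omega>)) = 0"
    and \<Phi>_eq: "\<And>i \<omega>. i < n \<Longrightarrow> \<omega> \<in> space M \<Longrightarrow>
      Re (f (of_real (x i + \<xi> i \<omega>))) - Re (integral\<^sup>L M (\<lambda>\<omega>'. f (of_real (x i) + of_real (\<xi> 0 \<omega>'))))
        = \<Phi> i (\<xi> i \<omega>)"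
    by (rule shifted_noise_decomposition[where \<xi>=\<xi> and x=x,
          OF M \<open>0 < n\<close> \<xi>_meas \<xi>_bdd \<xi>_distr x \<open>R + r \<le> R0\<close> f_cont]) (assumption+, rule that)
  have \<delta>_tail: "subgaussian_tail M n \<delta> \<sigma>' c' \<longleftrightarrow> subgaussian_tail M n (\<lambda>i \<omega>. \<Phi> i (\<xi> i \<omega>) + \<epsilon> i \<omega>) \<sigma>' c'"
    for \<sigma>' c'
  proof (rule subgaussian_tail_cong)
    fix i \<omega> assume "i < n" "\<omega> \<in> space M"
    from \<Phi>_eq[OF this] show "\<delta> i \<omega> = \<Phi> i (\<xi> i \<omega>) + \<epsilon> i \<omega>"
      unfolding \<delta>_def by linarith
  qed
  note noise = M \<xi>_meas \<epsilon>_meas indep \<Phi>_meas \<Phi>_bdd \<Phi>_mean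
  show "\<exists>\<sigma>' c'. 0 < \<sigma>' \<and> 0 < c' \<and> subgaussian_tail M n \<delta> \<sigma>' c'"
    if "subgaussian_tail M n \<epsilon> \<sigma> c" "0 < \<sigma>" "0 < c"
    using that subgaussian_tail_bounded_plus_subgaussian[OF noise that(1)] unfolding \<delta>_tail
    by (intro exI[of _ "2 * max (\<bar>B\<bar> + 1) \<sigma>"] exI[of _ "2 + c"]) auto
  show "\<exists>\<sigma>'. 0 < \<sigma>' \<and> subgaussian_tail M n \<delta> \<sigma>' 2"
    if "\<And>i \<omega>. i < n \<Longrightarrow> \<omega> \<in> space M \<Longrightarrow> \<bar>\<epsilon> i \<omega>\<bar> \<le> B'" "\<And>i. i < n \<Longrightarrow> integral\<^sup>L M (\<epsilon> i) = 0"
    using subgaussian_tail_bounded_plus_bounded[OF noise that] unfolding \<delta>_tail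
    by (intro exI[of _ "\<bar>B\<bar> + \<bar>B'\<bar> + 1"]) auto
qed

theorem proposition3p1:
  fixes M :: "'a measure"
    and n p :: nat
    and X :: "nat \<Rightarrow> nat \<Rightarrow> real"
    and \<beta> :: "nat \<Rightarrow> real"
    and R r R0 :: real
    and \<xi> \<epsilon> :: "nat \<Rightarrow> 'a \<Rightarrow> real"
    and f :: "complex \<Rightarrow> complex"
  assumes M: "prob_space M"
    and n_pos: "0 < n"
    and R_pos: "0 < R"
    and beta: "\<And>i. i < n \<Longrightarrow> \<bar>\<Sum>j<p. X i j * \<beta> j\<bar> \<le> R"
    and xi_meas: "\<And>i. i < n \<Longrightarrow> \<xi> i \<in> borel_measurable M"
    and eps_meas: "\<And>i. i < n \<Longrightarrow> \<epsilon> i \<in> borel_measurable M"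
    and indep: "prob_space.indep_vars M (\<lambda>_. borel)
                  (\<lambda>k. case k of Inl i \<Rightarrow> \<xi> i | Inr i \<Rightarrow> \<epsilon> i)
                  (Inl ` {..<n} \<union> Inr ` {..<n})"
    and xi_mean: "\<And>i. i < n \<Longrightarrow> integrable M (\<xi> i) \<and> integral\<^sup>L M (\<xi> i) = 0"
    and eps_mean: "\<And>i. i < n \<Longrightarrow> integrable M (\<epsilon> i) \<and> integral\<^sup>L M (\<epsilon> i) = 0"
    and xi_id: "\<And>i. i < n \<Longrightarrow> distr M borel (\<xi> i) = distr M borel (\<xi> 0)"
    and r_pos: "0 < r"
    and xi_bdd: "\<And>i \<omega>. i < n \<Longrightarrow> \<omega> \<in> space M \<Longrightarrow> \<bar>\<xi> i \<omega>\<bar> < r"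
    and R0: "R0 > R + r"
    and f_cont: "continuous_on (cball 0 R0) f"
    and f_holo: "f holomorphic_on ball 0 R0"
    and f_real: "\<And>x. \<bar>x\<bar> \<le> R0 \<Longrightarrow> f (complex_of_real x) \<in> \<real>"
  defines "g \<equiv> (\<lambda>z. integral\<^sup>L M (\<lambda>\<omega>. f (z + complex_of_real (\<xi> 0 \<omega>))))"
    and "\<delta> \<equiv> (\<lambda>i \<omega>. Re (f (complex_of_real ((\<Sum>j<p. X i j * \<beta> j) + \<xi> i \<omega>)))
                   - Re (integral\<^sup>L M (\<lambda>\<omega>'. f (complex_of_real (\<Sum>j<p. X i j * \<beta> j) + complex_of_real (\<xi> 0 \<omega>')))) + \<epsilon> i \<omega>)"
  shows "g holomorphic_on ball 0 (R0 - r)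
     \<and> dcoef (\<lambda>x. Re (g (complex_of_real x))) {-R..R}
         \<ge> dcoef (\<lambda>x. Re (f (complex_of_real x))) {-R0..R0}
     \<and> ((\<exists>\<sigma> c. 0 < \<sigma> \<and> 0 < c \<and> (\<forall>t\<ge>0. \<forall>a::nat \<Rightarrow> real.
            measure M {\<omega> \<in> space M. \<bar>\<Sum>i<n. a i * \<epsilon> i \<omega>\<bar> > t * sqrt (\<Sum>i<n. (a i)\<^sup>2)}
              \<le> c * exp (- t\<^sup>2 / (2 * \<sigma>\<^sup>2))))
        \<longrightarrow> (\<exists>\<sigma>' c'. 0 < \<sigma>' \<and> 0 < c' \<and> (\<forall>t\<ge>0. \<forall>a::nat \<Rightarrow> real.
            measure M {\<omega> \<in> space M. \<bar>\<Sum>i<n. a i * \<delta> i \<omega>\<bar> > t * sqrt (\<Sum>i<n. (a i)\<^sup>2)}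
              \<le> c' * exp (- t\<^sup>2 / (2 * \<sigma>'\<^sup>2)))))
     \<and> ((\<exists>B. \<forall>i<n. \<forall>\<omega>\<in>space M. \<bar>\<epsilon> i \<omega>\<bar> \<le> B)
        \<longrightarrow> (\<exists>\<sigma>'. 0 < \<sigma>' \<and> (\<forall>t\<ge>0. \<forall>a::nat \<Rightarrow> real.
            measure M {\<omega> \<in> space M. \<bar>\<Sum>i<n. a i * \<delta> i \<omega>\<bar> > t * sqrt (\<Sum>i<n. (a i)\<^sup>2)}
              \<le> 2 * exp (- t\<^sup>2 / (2 * \<sigma>'\<^sup>2)))))"
proof -
  have \<xi>_bdd: "\<And>i \<omega>. i < n \<Longrightarrow> \<omega> \<in> space M \<Longrightarrow> \<bar>\<xi> i \<omega>\<bar> \<le> r"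
    using xi_bdd by (simp add: less_imp_le)
  have \<xi>0: "\<xi> 0 \<in> borel_measurable M" and \<xi>0_bdd: "\<And>\<omega>. \<omega> \<in> space M \<Longrightarrow> \<bar>\<xi> 0 \<omega>\<bar> \<le> r"
    using xi_meas \<xi>_bdd n_pos by auto
  note noise_tail = subgaussian_tail_shifted_noise[where x="\<lambda>i. \<Sum>j<p. X i j * \<beta> j",
      OF M n_pos xi_meas eps_meas indep \<xi>_bdd xi_id beta less_imp_le[OF R0] f_cont, folded \<delta>_def]
  show ?thesis
    unfolding subgaussian_tail_def[symmetric]
  proof (intro conjI impI)
    show "g holomorphic_on ball 0 (R0 - r)"
      unfolding g_def by (rule holomorphic_on_integral_shift[OF prob_space.finite_measure[OF M] \<xi>0 \<xi>0_bdd f_cont f_holo])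
    show "dcoef (\<lambda>x. Re (g (of_real x))) {-R..R} \<ge> dcoef (\<lambda>x. Re (f (of_real x))) {-R0..R0}"
      unfolding g_def by (rule dcoef_Re_integral_shift_ge[OF M \<xi>0 \<xi>0_bdd f_cont R_pos less_imp_le[OF R0]])
    assume "\<exists>\<sigma> c. 0 < \<sigma> \<and> 0 < c \<and> subgaussian_tail M n \<epsilon> \<sigma> c"
    then show "\<exists>\<sigma>' c'. 0 < \<sigma>' \<and> 0 < c' \<and> subgaussian_tail M n \<delta> \<sigma>' c'"
      using noise_tail(1) by blast
  next
    assume "\<exists>B. \<forall>i<n. \<forall>\<omega>\<in>space M. \<bar>\<epsilon> i \<omega>\<bar> \<le> B"
    then show "\<exists>\<sigma>'. 0 < \<sigma>' \<and> subgaussian_tail M n \<delta> \<sigma>' 2"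
      using noise_tail(2) eps_mean by blast
  qed
qed

end
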